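(* In the FAVANO process, assume each $\nabla f_i$ is $L$-Lipschitz, the stochastic gradients have bounded variance $\sigma^2$, and $\eta<\frac{1}{4LK^2}$ and $\eta<\frac{1}{2LK}$. Then for every client $i$, time step $t\ge0$ and $q\in\{1,\dots,K\}$, $$\mathbb{E}\langle\nabla f(\mu_t),-h^i_{t+1,q}\rangle\le\frac{\mathbb{E}\|\nabla f(\mu_t)\|^2}{4}+C^i_t-\mathbb{E}\langle\nabla f(\mu_t),\nabla f_i(\mu_t)\rangle,$$ where $C^i_t=4L^2\eta^2K^2\sigma^2+20L^2\,\mathbb{E}\|w^i_t-\mu_t\|^2+16L^2\eta^2K^2\,\mathbb{E}\|\nabla f_i(\mu_t)\|^2$.
   Context: FAVANO process. Fix integers $n\ge1$, $1\le s\le n$, $K\ge1$, $d\ge1$, a step size $\eta>0$ and differentiable $f_1,\dots,f_n:\mathbb{R}^d\to\mathbb{R}$, $f=\frac1n\sum_i f_i$. All random variables live on one probability space. For each client $i$ a stochastic gradient oracle returns, at a query point $x$, $\widetilde g^i(x)=\nabla f_i(x)+\xi$ where, conditionally on everything generated before the query (including $x$), $\xi$ has mean zero (each query uses fresh noise). Initialize $w_0\in\mathbb{R}^d$ deterministic and $w_0^i=w_0$ for all $i$. For each $t\ge1$, each client $i$ and each $q\ge1$ define recursively $\widetilde h^i_{t,q}=\widetilde g^i\big(w^i_{t-1}-\eta\sum_{r=1}^{q-1}\widetilde h^i_{t,r}\big)$ and $h^i_{t,q}=\nabla f_i\big(w^i_{t-1}-\eta\sum_{r=1}^{q-1}\widetilde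 h^i_{t,r}\big)$. At each $t\ge1$ there are random integers $E^1_t,\dots,E^n_t\ge0$ with $\mathbf{P}(E^i_t>0)>0$, and a random subset $\mathcal{S}_t\subseteq\{1,\dots,n\}$ uniformly distributed among subsets of size $s$; the family $(\mathcal S_t,E^1_t,\dots,E^n_t)$ is independent of all the other randomness (the past up to time $t-1$ and all $\widetilde h^i_{t,q}$), and $\mathcal S_t$ is independent of $(E^i_t)_i$. The weight $\alpha^i_t$ is either $\mathbf{P}(E^i_t>0)\,(E^i_t\wedge K)$ (stochastic version) or $\mathbb{E}[E^i_t\wedge K]$ (deterministic version), where $a\wedge b=\min(a,b)$. Set $\check h^i_t=\frac{1}{\alpha^i_t}\sum_{q=1}^{E^i_t\wedge K}\widetilde h^i_{t,q}$ if $E^i_t>0$ and $\check h^i_t=0$ otherwise. Updates: $w_t=\frac{1}{s+1}\big(w_{t-1}+\sum_{i\in\mathcal S_t}(w^i_{t-1}-\eta\check h^i_t)\big)$; $w^i_t=w_t$ for $i\in\mathcal S_t$ and $w^i_t=w^i_{t-1}$ for $i\notin\mathcal S_t$. Define $\mu_t=\frac{1}{n+1}\big(w_t+\sum_{i=1}^n w^i_t\big)$. All expectations appearing are assumed finite. Smoothness: $\|\nabla f_i(x)-\nabla f_i(y)\|\le L\|x-y\|$ for all $i,x,y$, with $L>0$. Bounded variance: conditionally on everything generated before a query at $x$, $\mathbb{E}\|\widetilde g^i(x)-\nabla f_i(x)\|^2\le\sigma^2$. *)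

theory Defs
  imports "HOL-Probability.Probability"
begin

definition preimgs :: "'a measure \<Rightarrow> ('a \<Rightarrow> 'b) \<Rightarrow> 'b measure \<Rightarrow> 'a set set" where
  "preimgs M X N = {X -` B \<inter> space M | B. B \<in> sets N}"

text \<open>Generators of the sigma-algebra of all randomness produced at rounds 1,...,t-1:
  the sampled sets S, the local-step counts E and all oracle noises xi (clients j < n, steps r >= 1).\<close>
definition past_gen :: "'a measure \<Rightarrow> nat \<Rightarrow> (nat \<Rightarrow> 'a \<Rightarrow> nat set) \<Rightarrow> (nat \<Rightarrow> nat \<Rightarrow> 'a \<Rightarrow> nat)
    \<Rightarrow> (nat \<Rightarrow> nat \<Rightarrow> nat \<Rightarrow> 'a \<Rightarrow> 'v::euclidean_space) \<Rightarrow> nat \<Rightarrow> 'a set set" where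
  "past_gen M n S E \<xi> t =
     (\<Union>t'\<in>{1..<t}. preimgs M (S t') (count_space UNIV)
        \<union> (\<Union>j<n. preimgs M (E t' j) (count_space UNIV))
        \<union> (\<Union>j<n. \<Union>r\<in>{1..}. preimgs M (\<xi> t' j r) borel))"

end

theory Submission
  imports Defs
begin

text \<open>The bound is pathwise up to one expectation. Write \<open>g = \<nabla>f(\<mu>\<^sub>t)\<close>; then
  \<open>\<langle>g, -h\<rangle> = \<langle>g, \<nabla>f\<^sub>i(\<mu>\<^sub>t) - h\<rangle> - \<langle>g, \<nabla>f\<^sub>i(\<mu>\<^sub>t)\<rangle>\<close>, and Cauchy-Schwarz, Young and
  \<open>L\<close>-smoothness bound the first term by \<open>\<parallel>g\<parallel>\<^sup>2/4 + L\<^sup>2 \<parallel>y\<^sub>q - \<mu>\<^sub>t\<parallel>\<^sup>2\<close>, where \<open>y\<^sub>q\<close> is the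
  \<open>q\<close>-th local query point. Unrolling the local recursion and using \<open>\<eta>LK \<le> 1/4\<close>, a
  strong induction on \<open>q\<close> gives
  \<open>\<parallel>y\<^sub>q - \<mu>\<^sub>t\<parallel> \<le> 4/3 (\<parallel>w\<^sup>i\<^sub>t - \<mu>\<^sub>t\<parallel> + \<eta>K\<parallel>\<nabla>f\<^sub>i(\<mu>\<^sub>t)\<parallel> + \<eta> \<Sum>\<^sub>r\<^sub><\<^sub>q \<parallel>\<xi>\<^sub>r\<parallel>)\<close>.
  Squaring and taking expectations, each noise term contributes at most \<open>\<sigma>\<^sup>2\<close>.\<close>

lemma lipschitz_local_iterate_dist_step:
  fixes y :: "nat \<Rightarrow> 'v::real_normed_vector" and G :: "'v \<Rightarrow> 'v" and \<xi> :: "nat \<Rightarrow> 'v"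
  assumes rec: "y p = w - \<eta> *\<^sub>R (\<Sum>r\<in>{1..<p}. G (y r) + \<xi> r)"
    and Lip: "\<forall>x z. norm (G x - G z) \<le> L * norm (x - z)"
    and eta: "0 < \<eta>" and L: "0 < L" and p: "1 \<le> p" "p \<le> K"
    and D: "0 \<le> D" "\<forall>r\<in>{1..<p}. norm (y r - m) \<le> D"
  shows "norm (y p - m) \<le> norm (w - m) + \<eta> * real K * norm (G m) + \<eta> * real K * L * D
           + \<eta> * (\<Sum>r\<in>{1..<p}. norm (\<xi> r))"
proof -
  have "(\<Sum>r\<in>{1..<p}. G (y r) + \<xi> r)
      = (\<Sum>r\<in>{1..<p}. G (y r) - G m) + (\<Sum>r\<in>{1..<p}. \<xi> r) + real (p - 1) *\<^sub>R G m"
    by (simp add: sum.distrib sum_subtractf sum_constant_scaleR)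
  then have "y p - m = (w - m) - \<eta> *\<^sub>R (real (p - 1) *\<^sub>R G m)
       - \<eta> *\<^sub>R (\<Sum>r\<in>{1..<p}. G (y r) - G m) - \<eta> *\<^sub>R (\<Sum>r\<in>{1..<p}. \<xi> r)"
    using rec by (simp add: algebra_simps)
  then have "norm (y p - m) \<le> norm (w - m) + \<eta> * norm (real (p - 1) *\<^sub>R G m)
       + \<eta> * norm (\<Sum>r\<in>{1..<p}. G (y r) - G m) + \<eta> * norm (\<Sum>r\<in>{1..<p}. \<xi> r)"
    using eta by (smt (verit, best) norm_scaleR norm_triangle_ineq4 abs_of_pos)
  also have "\<dots> \<le> norm (w - m) + \<eta> * (real K * norm (G m)) + \<eta> * (real K * (L * D))
       + \<eta> * (\<Sum>r\<in>{1..<p}. norm (\<xi> r))"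
  proof -
    have "norm (real (p - 1) *\<^sub>R G m) \<le> real K * norm (G m)"
      using p by (auto intro!: mult_right_mono)
    moreover have "norm (\<Sum>r\<in>{1..<p}. G (y r) - G m) \<le> real K * (L * D)"
    proof -
      have "norm (\<Sum>r\<in>{1..<p}. G (y r) - G m) \<le> (\<Sum>r\<in>{1..<p}. L * D)"
        using Lip D L by (intro order.trans[OF norm_sum] sum_mono)
          (meson mult_left_mono less_imp_le order.trans)
      also have "\<dots> = real (p - 1) * (L * D)"
        by simp
      also have "\<dots> \<le> real K * (L * D)"
        using p L D by (intro mult_right_mono) auto
      finally show ?thesis .
    qed
    ultimately show ?thesis
      using eta by (intro add_mono mult_left_mono norm_sum order.refl) auto
  qed
  finally show ?thesis
    by (simp add: algebra_simps)
qed

text \<open>The factor \<open>4/3\<close> is the fixed point of \<open>B \<mapsto> 1 + (1/4) B\<close>, which is the one-step estimate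
  under \<open>\<eta>LK \<le> 1/4\<close>.\<close>

lemma lipschitz_local_iterate_dist_le:
  fixes y :: "nat \<Rightarrow> 'v::real_normed_vector" and G :: "'v \<Rightarrow> 'v" and \<xi> :: "nat \<Rightarrow> 'v"
  assumes rec: "\<forall>p\<ge>1. y p = w - \<eta> *\<^sub>R (\<Sum>r\<in>{1..<p}. G (y r) + \<xi> r)"
    and Lip: "\<forall>x z. norm (G x - G z) \<le> L * norm (x - z)"
    and eta: "0 < \<eta>" and L: "0 < L" and small: "\<eta> * L * real K \<le> 1/4"
    and q: "q \<in> {1..K}"
  shows "norm (y q - m) \<le> 4/3 * (norm (w - m) + \<eta> * real K * norm (G m) + \<eta> * (\<Sum>r\<in>{1..<q}. norm (\<xi> r)))"
proof -
  define B where "B = norm (w - m) + \<eta> * real K * norm (G m) + \<eta> * (\<Sum>r\<in>{1..<q}. norm (\<xi> r))"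
  have B0: "0 \<le> B"
    unfolding B_def using eta by (auto intro!: add_nonneg_nonneg sum_nonneg mult_nonneg_nonneg)
  have "norm (y p - m) \<le> 4/3 * B" if "1 \<le> p" "p \<le> q" for p
    using that
  proof (induction p rule: less_induct)
    case (less p)
    then have "norm (y p - m) \<le> norm (w - m) + \<eta> * real K * norm (G m) + \<eta> * real K * L * (4/3 * B)
        + \<eta> * (\<Sum>r\<in>{1..<p}. norm (\<xi> r))"
      using rec q B0 by (intro lipschitz_local_iterate_dist_step[OF _ Lip eta L]) auto
    also have "\<dots> \<le> B + (\<eta> * L * real K) * (4/3 * B)"
      using less.prems eta unfolding B_def by (simp add: algebra_simps sum_mono2)
    also have "\<dots> \<le> B + 1/4 * (4/3 * B)"
      using small B0 by (intro add_left_mono mult_right_mono) auto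
    finally show ?case by simp
  qed
  then show ?thesis
    using q unfolding B_def by auto
qed

lemma lipschitz_local_iterate_dist_sq_le:
  fixes y :: "nat \<Rightarrow> 'v::real_normed_vector" and G :: "'v \<Rightarrow> 'v" and \<xi> :: "nat \<Rightarrow> 'v"
  assumes rec: "\<forall>p\<ge>1. y p = w - \<eta> *\<^sub>R (\<Sum>r\<in>{1..<p}. G (y r) + \<xi> r)"
    and Lip: "\<forall>x z. norm (G x - G z) \<le> L * norm (x - z)"
    and eta: "0 < \<eta>" and L: "0 < L" and small: "\<eta> * L * real K \<le> 1/4"
    and q: "q \<in> {1..K}"
  shows "(norm (y q - m))\<^sup>2 \<le> 64/9 * (norm (w - m))\<^sup>2 + 64/9 * \<eta>\<^sup>2 * (real K)\<^sup>2 * (norm (G m))\<^sup>2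
           + 32/9 * \<eta>\<^sup>2 * real K * (\<Sum>r\<in>{1..<q}. (norm (\<xi> r))\<^sup>2)"
proof -
  define a where "a = norm (w - m)"
  define b where "b = \<eta> * real K * norm (G m)"
  define X where "X = (\<Sum>r\<in>{1..<q}. norm (\<xi> r))"
  have "(norm (y q - m))\<^sup>2 \<le> (4/3 * (a + b + \<eta> * X))\<^sup>2"
    using lipschitz_local_iterate_dist_le[OF rec Lip eta L small q, of m]
    unfolding a_def b_def X_def by (intro power_mono) auto
  also have "\<dots> \<le> 16/9 * (4 * a\<^sup>2 + 4 * b\<^sup>2 + 2 * \<eta>\<^sup>2 * X\<^sup>2)"
  proof -
    have "0 \<le> 2 * (a - b)\<^sup>2 + (a + b - \<eta> * X)\<^sup>2" by simp
    then show ?thesis by (simp add: power2_eq_square algebra_simps)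
  qed
  also have "\<dots> \<le> 16/9 * (4 * a\<^sup>2 + 4 * b\<^sup>2 + 2 * \<eta>\<^sup>2 * (real K * (\<Sum>r\<in>{1..<q}. (norm (\<xi> r))\<^sup>2)))"
  proof -
    have "X\<^sup>2 \<le> (\<Sum>r\<in>{1..<q}. (norm (\<xi> r))\<^sup>2) * card {1..<q}"
      unfolding X_def by (rule sum_squared_le_sum_of_squares)
    also have "\<dots> \<le> real K * (\<Sum>r\<in>{1..<q}. (norm (\<xi> r))\<^sup>2)"
      using q by (subst mult.commute) (intro mult_right_mono sum_nonneg; auto)
    finally have "X\<^sup>2 \<le> real K * (\<Sum>r\<in>{1..<q}. (norm (\<xi> r))\<^sup>2)" .
    then show ?thesis
      using mult_left_mono[of "X\<^sup>2" _ "\<eta>\<^sup>2"] by simp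
  qed
  finally show ?thesis
    unfolding a_def b_def by (simp add: algebra_simps power_mult_distrib)
qed

lemma inner_neg_lipschitz_le:
  fixes g y m :: "'v::real_inner" and G :: "'v \<Rightarrow> 'v"
  assumes Lip: "\<forall>x z. norm (G x - G z) \<le> L * norm (x - z)"
  shows "inner g (- G y) \<le> (norm g)\<^sup>2 / 4 + L\<^sup>2 * (norm (y - m))\<^sup>2 - inner g (G m)"
proof -
  have "inner g (G m - G y) \<le> norm g * norm (G m - G y)"
    by (rule norm_cauchy_schwarz)
  also have "\<dots> \<le> norm g * (L * norm (y - m))"
    using Lip by (metis mult_left_mono norm_ge_zero norm_minus_commute)
  also have "\<dots> \<le> (norm g)\<^sup>2 / 4 + L\<^sup>2 * (norm (y - m))\<^sup>2"
  proof -
    have "0 \<le> (norm g / 2 - L * norm (y - m))\<^sup>2" by simp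
    then show ?thesis by (simp add: power2_eq_square algebra_simps)
  qed
  finally show ?thesis
    by (simp add: inner_diff_right)
qed

lemma inner_neg_lipschitz_local_iterate_le:
  fixes g m :: "'v::real_inner" and y :: "nat \<Rightarrow> 'v" and G :: "'v \<Rightarrow> 'v" and \<xi> :: "nat \<Rightarrow> 'v"
  assumes rec: "\<forall>p\<ge>1. y p = w - \<eta> *\<^sub>R (\<Sum>r\<in>{1..<p}. G (y r) + \<xi> r)"
    and Lip: "\<forall>x z. norm (G x - G z) \<le> L * norm (x - z)"
    and eta: "0 < \<eta>" and L: "0 < L" and small: "\<eta> * L * real K \<le> 1/4"
    and q: "q \<in> {1..K}"
  shows "inner g (- G (y q)) \<le> (norm g)\<^sup>2 / 4 + 20 * L\<^sup>2 * (norm (w - m))\<^sup>2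
           + 16 * L\<^sup>2 * \<eta>\<^sup>2 * (real K)\<^sup>2 * (norm (G m))\<^sup>2
           + 32/9 * L\<^sup>2 * \<eta>\<^sup>2 * real K * (\<Sum>r\<in>{1..<q}. (norm (\<xi> r))\<^sup>2) - inner g (G m)"
proof -
  have "64/9 * (norm (w - m))\<^sup>2 \<le> 20 * (norm (w - m))\<^sup>2"
    and "64/9 * \<eta>\<^sup>2 * (real K)\<^sup>2 * (norm (G m))\<^sup>2 \<le> 16 * \<eta>\<^sup>2 * (real K)\<^sup>2 * (norm (G m))\<^sup>2"
    by (intro mult_right_mono; simp)+
  then have "(norm (y q - m))\<^sup>2 \<le> 20 * (norm (w - m))\<^sup>2 + 16 * \<eta>\<^sup>2 * (real K)\<^sup>2 * (norm (G m))\<^sup>2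
      + 32/9 * \<eta>\<^sup>2 * real K * (\<Sum>r\<in>{1..<q}. (norm (\<xi> r))\<^sup>2)"
    using lipschitz_local_iterate_dist_sq_le[OF rec Lip eta L small q, of m] by linarith
  from mult_left_mono[OF this, of "L\<^sup>2"] show ?thesis
    using inner_neg_lipschitz_le[OF Lip, of g "y q" m] by (simp add: algebra_simps)
qed

lemma (in prob_space) inner_neg_lipschitz_local_iterate_expectation_le:
  fixes g w m :: "'a \<Rightarrow> 'v::real_inner" and G :: "'v \<Rightarrow> 'v" and y \<xi> :: "nat \<Rightarrow> 'a \<Rightarrow> 'v"
  assumes rec: "\<forall>\<omega>\<in>space M. \<forall>p\<ge>1. y p \<omega> = w \<omega> - \<eta> *\<^sub>R (\<Sum>r\<in>{1..<p}. G (y r \<omega>) + \<xi> r \<omega>)"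
    and Lip: "\<forall>x z. norm (G x - G z) \<le> L * norm (x - z)"
    and eta: "0 < \<eta>" and L: "0 < L" and small: "\<eta> * L * real K \<le> 1/4"
    and q: "q \<in> {1..K}"
    and noise: "\<forall>r\<in>{1..<q}. integrable M (\<lambda>\<omega>. (norm (\<xi> r \<omega>))\<^sup>2) \<and> (\<integral>\<omega>. (norm (\<xi> r \<omega>))\<^sup>2 \<partial>M) \<le> \<sigma>\<^sup>2"
    and int_lhs: "integrable M (\<lambda>\<omega>. inner (g \<omega>) (- G (y q \<omega>)))"
    and int_g: "integrable M (\<lambda>\<omega>. (norm (g \<omega>))\<^sup>2)"
    and int_gm: "integrable M (\<lambda>\<omega>. inner (g \<omega>) (G (m \<omega>)))"
    and int_wm: "integrable M (\<lambda>\<omega>. (norm (w \<omega> - m \<omega>))\<^sup>2)"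
    and int_Gm: "integrable M (\<lambda>\<omega>. (norm (G (m \<omega>)))\<^sup>2)"
  shows "(\<integral>\<omega>. inner (g \<omega>) (- G (y q \<omega>)) \<partial>M)
    \<le> (\<integral>\<omega>. (norm (g \<omega>))\<^sup>2 \<partial>M) / 4
       + (4 * L\<^sup>2 * \<eta>\<^sup>2 * (real K)\<^sup>2 * \<sigma>\<^sup>2
          + 20 * L\<^sup>2 * (\<integral>\<omega>. (norm (w \<omega> - m \<omega>))\<^sup>2 \<partial>M)
          + 16 * L\<^sup>2 * \<eta>\<^sup>2 * (real K)\<^sup>2 * (\<integral>\<omega>. (norm (G (m \<omega>)))\<^sup>2 \<partial>M))
       - (\<integral>\<omega>. inner (g \<omega>) (G (m \<omega>)) \<partial>M)"
proof -
  define N where "N r \<omega> = (norm (\<xi> r \<omega>))\<^sup>2" for r \<omega>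
  define R where "R \<omega> = (norm (g \<omega>))\<^sup>2 / 4 + 20 * L\<^sup>2 * (norm (w \<omega> - m \<omega>))\<^sup>2
      + 16 * L\<^sup>2 * \<eta>\<^sup>2 * (real K)\<^sup>2 * (norm (G (m \<omega>)))\<^sup>2
      + 32/9 * L\<^sup>2 * \<eta>\<^sup>2 * real K * (\<Sum>r\<in>{1..<q}. N r \<omega>) - inner (g \<omega>) (G (m \<omega>))" for \<omega>
  have "inner (g \<omega>) (- G (y q \<omega>)) \<le> R \<omega>" if "\<omega> \<in> space M" for \<omega>
    unfolding R_def N_def using rec that
    by (intro inner_neg_lipschitz_local_iterate_le[OF _ Lip eta L small q]) blast
  moreover have "integrable M R"
    using noise unfolding R_def N_def
    by (intro Bochner_Integration.integrable_add Bochner_Integration.integrable_diff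
        Bochner_Integration.integrable_mult_right Bochner_Integration.integrable_divide_zero
        Bochner_Integration.integrable_sum int_g int_gm int_wm int_Gm) auto
  ultimately have "(\<integral>\<omega>. inner (g \<omega>) (- G (y q \<omega>)) \<partial>M) \<le> integral\<^sup>L M R"
    using int_lhs by (intro integral_mono) auto
  also have "integral\<^sup>L M R = (\<integral>\<omega>. (norm (g \<omega>))\<^sup>2 \<partial>M) / 4
      + 20 * L\<^sup>2 * (\<integral>\<omega>. (norm (w \<omega> - m \<omega>))\<^sup>2 \<partial>M)
      + 16 * L\<^sup>2 * \<eta>\<^sup>2 * (real K)\<^sup>2 * (\<integral>\<omega>. (norm (G (m \<omega>)))\<^sup>2 \<partial>M)
      + 32/9 * L\<^sup>2 * \<eta>\<^sup>2 * real K * (\<Sum>r\<in>{1..<q}. integral\<^sup>L M (N r))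
      - (\<integral>\<omega>. inner (g \<omega>) (G (m \<omega>)) \<partial>M)"
    using noise unfolding R_def N_def
    by (intro has_bochner_integral_integral_eq has_bochner_integral_add has_bochner_integral_diff
        has_bochner_integral_mult_right has_bochner_integral_divide_zero has_bochner_integral_sum
        has_bochner_integral_integrable int_g int_gm int_wm int_Gm) auto
  also have "32/9 * L\<^sup>2 * \<eta>\<^sup>2 * real K * (\<Sum>r\<in>{1..<q}. integral\<^sup>L M (N r))
      \<le> 4 * L\<^sup>2 * \<eta>\<^sup>2 * (real K)\<^sup>2 * \<sigma>\<^sup>2"
  proof -
    have "(\<Sum>r\<in>{1..<q}. integral\<^sup>L M (N r)) \<le> real (q - 1) * \<sigma>\<^sup>2"
      using noise sum_mono[of "{1..<q}" "\<lambda>r. integral\<^sup>L M (N r)" "\<lambda>_. \<sigma>\<^sup>2"]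
      unfolding N_def by simp
    also have "\<dots> \<le> real K * \<sigma>\<^sup>2"
      using q by (intro mult_right_mono) auto
    finally have "32/9 * L\<^sup>2 * \<eta>\<^sup>2 * real K * (\<Sum>r\<in>{1..<q}. integral\<^sup>L M (N r))
        \<le> 32/9 * L\<^sup>2 * \<eta>\<^sup>2 * real K * (real K * \<sigma>\<^sup>2)"
      by (intro mult_left_mono) auto
    also have "\<dots> \<le> 4 * L\<^sup>2 * \<eta>\<^sup>2 * (real K)\<^sup>2 * \<sigma>\<^sup>2"
      using zero_le_power2[of "L * \<eta> * real K * \<sigma>"]
      by (simp add: power2_eq_square algebra_simps)
    finally show ?thesis .
  qed
  finally show ?thesis
    by simp
qed

lemma (in prob_space) expectation_le_of_indicator_integral_le:
  assumes "space M \<in> F" and "\<forall>A\<in>F. (\<integral>\<omega>. indicator A \<omega> * X \<omega> \<partial>M) \<le> c * prob A"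
  shows "expectation X \<le> c"
proof -
  have "(\<integral>\<omega>. indicator (space M) \<omega> * X \<omega> \<partial>M) = expectation X"
    by (rule Bochner_Integration.integral_cong) auto
  then show ?thesis
    using assms prob_space by force
qed

lemma step_size_le_quarter:
  assumes "0 < \<eta>" "0 < L" "1 \<le> K" "\<eta> < 1 / (4 * L * real K ^ 2)"
  shows "\<eta> * L * real K \<le> 1/4"
proof -
  have "\<eta> * L * real K \<le> \<eta> * L * real K ^ 2"
    using assms by (simp add: power2_eq_square)
  also have "\<dots> < 1/4"
    using assms by (simp add: field_simps)
  finally show ?thesis by simp
qed

theorem mainTheorem8:
  fixes M :: "'a measure"
    and n s K :: nat and \<eta> L \<sigma> :: real
    and f :: "nat \<Rightarrow> 'v::euclidean_space \<Rightarrow> real" and grad :: "nat \<Rightarrow> 'v \<Rightarrow> 'v"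
    and w0 :: 'v
    and \<xi> :: "nat \<Rightarrow> nat \<Rightarrow> nat \<Rightarrow> 'a \<Rightarrow> 'v"
    and Y :: "nat \<Rightarrow> nat \<Rightarrow> nat \<Rightarrow> 'a \<Rightarrow> 'v"
    and S :: "nat \<Rightarrow> 'a \<Rightarrow> nat set" and E :: "nat \<Rightarrow> nat \<Rightarrow> 'a \<Rightarrow> nat"
    and \<alpha> :: "nat \<Rightarrow> nat \<Rightarrow> 'a \<Rightarrow> real"
    and hc :: "nat \<Rightarrow> nat \<Rightarrow> 'a \<Rightarrow> 'v"
    and W :: "nat \<Rightarrow> 'a \<Rightarrow> 'v" and Wc :: "nat \<Rightarrow> nat \<Rightarrow> 'a \<Rightarrow> 'v"
    and \<mu> :: "nat \<Rightarrow> 'a \<Rightarrow> 'v"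
  assumes P: "prob_space M"
    and n_pos: "1 \<le> n" and s_rng: "1 \<le> s" "s \<le> n" and K_pos: "1 \<le> K"
    and eta_pos: "0 < \<eta>"
    \<comment> \<open>differentiability and gradients\<close>
    and grad: "\<forall>i<n. \<forall>x. GDERIV (f i) x :> grad i x"
    \<comment> \<open>smoothness\<close>
    and L_pos: "0 < L"
    and Lip: "\<forall>i<n. \<forall>x y. norm (grad i x - grad i y) \<le> L * norm (x - y)"
    \<comment> \<open>step-size conditions\<close>
    and eta1: "\<eta> < 1 / (4 * L * real K ^ 2)"
    and eta2: "\<eta> < 1 / (2 * L * real K)"
    \<comment> \<open>local iterates: Y t i q is the q-th query point of client i at round t;
        the stochastic gradient returned there is grad i (Y t i q) + xi t i q\<close>
    and Y_def: "\<forall>t\<ge>1. \<forall>i<n. \<forall>q\<ge>1. \<forall>\<omega>\<in>space M.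
        Y t i q \<omega> = Wc (t - 1) i \<omega> - \<eta> *\<^sub>R (\<Sum>r\<in>{1..<q}. grad i (Y t i r \<omega>) + \<xi> t i r \<omega>)"
    \<comment> \<open>oracle noise: measurable, square integrable, conditionally mean zero with
        conditional second moment at most sigma^2 given everything generated before the query\<close>
    and xi_meas: "\<forall>t\<ge>1. \<forall>i<n. \<forall>q\<ge>1. \<xi> t i q \<in> borel_measurable M"
    and xi_int: "\<forall>t\<ge>1. \<forall>i<n. \<forall>q\<ge>1. integrable M (\<xi> t i q) \<and>
        integrable M (\<lambda>\<omega>. (norm (\<xi> t i q \<omega>))\<^sup>2)"
    and xi_mean: "\<forall>t\<ge>1. \<forall>i<n. \<forall>q\<ge>1. \<forall>A\<in>sigma_sets (space M)
          (past_gen M n S E \<xi> t \<union> (\<Union>r\<in>{1..<q}. preimgs M (\<xi> t i r) borel)).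
        (\<integral>\<omega>. indicator A \<omega> *\<^sub>R \<xi> t i q \<omega> \<partial>M) = 0"
    and xi_var: "\<forall>t\<ge>1. \<forall>i<n. \<forall>q\<ge>1. \<forall>A\<in>sigma_sets (space M)
          (past_gen M n S E \<xi> t \<union> (\<Union>r\<in>{1..<q}. preimgs M (\<xi> t i r) borel)).
        (\<integral>\<omega>. indicator A \<omega> * (norm (\<xi> t i q \<omega>))\<^sup>2 \<partial>M) \<le> \<sigma>\<^sup>2 * measure M A"
    \<comment> \<open>client sampling and number of local steps\<close>
    and S_meas: "\<forall>t\<ge>1. S t \<in> measurable M (count_space UNIV)"
    and E_meas: "\<forall>t\<ge>1. \<forall>i<n. E t i \<in> measurable M (count_space UNIV)"
    and S_unif: "\<forall>t\<ge>1. \<forall>A. A \<subseteq> {..<n} \<and> card A = s \<longrightarrow>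
        measure M {\<omega>\<in>space M. S t \<omega> = A} = 1 / real (n choose s)"
    and S_range: "\<forall>t\<ge>1. \<forall>\<omega>\<in>space M. S t \<omega> \<subseteq> {..<n} \<and> card (S t \<omega>) = s"
    and E_pos: "\<forall>t\<ge>1. \<forall>i<n. measure M {\<omega>\<in>space M. 0 < E t i \<omega>} > 0"
    and indep_SE_rest: "\<forall>t\<ge>1. prob_space.indep_set M
        (sigma_sets (space M) (preimgs M (S t) (count_space UNIV)
            \<union> (\<Union>j<n. preimgs M (E t j) (count_space UNIV))))
        (sigma_sets (space M) (past_gen M n S E \<xi> t
            \<union> (\<Union>j<n. \<Union>r\<in>{1..}. preimgs M (\<xi> t j r) borel)))"
    and indep_S_E: "\<forall>t\<ge>1. prob_space.indep_set M
        (sigma_sets (space M) (preimgs M (S t) (count_space UNIV)))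
        (sigma_sets (space M) (\<Union>j<n. preimgs M (E t j) (count_space UNIV)))"
    \<comment> \<open>weights: stochastic version or deterministic version\<close>
    and alpha: "(\<forall>t\<ge>1. \<forall>i<n. \<forall>\<omega>\<in>space M. \<alpha> t i \<omega> =
                   measure M {\<omega>'\<in>space M. 0 < E t i \<omega>'} * real (min (E t i \<omega>) K))
              \<or> (\<forall>t\<ge>1. \<forall>i<n. \<forall>\<omega>\<in>space M. \<alpha> t i \<omega> =
                   (\<integral>\<omega>'. real (min (E t i \<omega>') K) \<partial>M))"
    and hc_def: "\<forall>t\<ge>1. \<forall>i<n. \<forall>\<omega>\<in>space M. hc t i \<omega> =
        (if 0 < E t i \<omega>
         then (1 / \<alpha> t i \<omega>) *\<^sub>R (\<Sum>q\<in>{1..min (E t i \<omega>) K}. grad i (Y t i q \<omega>) + \<xi> t i q \<omega>)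
         else 0)"
    \<comment> \<open>server / client updates\<close>
    and W0: "\<forall>\<omega>\<in>space M. W 0 \<omega> = w0" and Wc0: "\<forall>i<n. \<forall>\<omega>\<in>space M. Wc 0 i \<omega> = w0"
    and W_step: "\<forall>t\<ge>1. \<forall>\<omega>\<in>space M. W t \<omega> = (1 / (real s + 1)) *\<^sub>R
        (W (t - 1) \<omega> + (\<Sum>i\<in>S t \<omega>. Wc (t - 1) i \<omega> - \<eta> *\<^sub>R hc t i \<omega>))"
    and Wc_step: "\<forall>t\<ge>1. \<forall>i<n. \<forall>\<omega>\<in>space M.
        Wc t i \<omega> = (if i \<in> S t \<omega> then W t \<omega> else Wc (t - 1) i \<omega>)"
    and mu_def: "\<forall>t. \<forall>\<omega>\<in>space M. \<mu> t \<omega> = (1 / (real n + 1)) *\<^sub>R (W t \<omega> + (\<Sum>i<n. Wc t i \<omega>))"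
    \<comment> \<open>finiteness of the expectations appearing in the statement\<close>
    and int_fin: "\<forall>t. \<forall>i<n. \<forall>q\<in>{1..K}.
        integrable M (\<lambda>\<omega>. inner ((1 / real n) *\<^sub>R (\<Sum>j<n. grad j (\<mu> t \<omega>))) (- grad i (Y (Suc t) i q \<omega>)))
      \<and> integrable M (\<lambda>\<omega>. (norm ((1 / real n) *\<^sub>R (\<Sum>j<n. grad j (\<mu> t \<omega>))))\<^sup>2)
      \<and> integrable M (\<lambda>\<omega>. inner ((1 / real n) *\<^sub>R (\<Sum>j<n. grad j (\<mu> t \<omega>))) (grad i (\<mu> t \<omega>)))
      \<and> integrable M (\<lambda>\<omega>. (norm (Wc t i \<omega> - \<mu> t \<omega>))\<^sup>2)
      \<and> integrable M (\<lambda>\<omega>. (norm (grad i (\<mu> t \<omega>)))\<^sup>2)"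
  shows "\<forall>i<n. \<forall>t. \<forall>q\<in>{1..K}.
    (\<integral>\<omega>. inner ((1 / real n) *\<^sub>R (\<Sum>j<n. grad j (\<mu> t \<omega>))) (- grad i (Y (Suc t) i q \<omega>)) \<partial>M)
    \<le> (\<integral>\<omega>. (norm ((1 / real n) *\<^sub>R (\<Sum>j<n. grad j (\<mu> t \<omega>))))\<^sup>2 \<partial>M) / 4
       + (4 * L\<^sup>2 * \<eta>\<^sup>2 * (real K)\<^sup>2 * \<sigma>\<^sup>2
          + 20 * L\<^sup>2 * (\<integral>\<omega>. (norm (Wc t i \<omega> - \<mu> t \<omega>))\<^sup>2 \<partial>M)
          + 16 * L\<^sup>2 * \<eta>\<^sup>2 * (real K)\<^sup>2 * (\<integral>\<omega>. (norm (grad i (\<mu> t \<omega>)))\<^sup>2 \<partial>M))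
       - (\<integral>\<omega>. inner ((1 / real n) *\<^sub>R (\<Sum>j<n. grad j (\<mu> t \<omega>))) (grad i (\<mu> t \<omega>)) \<partial>M)"
proof -
  interpret prob_space M by (rule P)
  have small: "\<eta> * L * real K \<le> 1/4"
    using eta_pos L_pos K_pos eta1 by (rule step_size_le_quarter)
  have rec: "\<forall>\<omega>\<in>space M. \<forall>p\<ge>1. Y (Suc t) i p \<omega>
      = Wc t i \<omega> - \<eta> *\<^sub>R (\<Sum>r\<in>{1..<p}. grad i (Y (Suc t) i r \<omega>) + \<xi> (Suc t) i r \<omega>)"
    if "i < n" for i t
  proof (intro ballI allI impI)
    fix \<omega> p assume "\<omega> \<in> space M" "1 \<le> (p::nat)"
    then show "Y (Suc t) i p \<omega> = Wc t i \<omega> - \<eta> *\<^sub>R (\<Sum>r\<in>{1..<p}. grad i (Y (Suc t) i r \<omega>) + \<xi> (Suc t) i r \<omega>)"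
      using Y_def[rule_format, of "Suc t" i p \<omega>] that by simp
  qed
  have noise: "\<forall>r\<in>{1..<q}. integrable M (\<lambda>\<omega>. (norm (\<xi> (Suc t) i r \<omega>))\<^sup>2)
      \<and> (\<integral>\<omega>. (norm (\<xi> (Suc t) i r \<omega>))\<^sup>2 \<partial>M) \<le> \<sigma>\<^sup>2"
    if "i < n" for i t q
  proof
    fix r assume r: "r \<in> {1..<q}"
    have "\<forall>A\<in>sigma_sets (space M) (past_gen M n S E \<xi> (Suc t) \<union> (\<Union>r'\<in>{1..<r}. preimgs M (\<xi> (Suc t) i r') borel)).
        (\<integral>\<omega>. indicator A \<omega> * (norm (\<xi> (Suc t) i r \<omega>))\<^sup>2 \<partial>M) \<le> \<sigma>\<^sup>2 * prob A"
      using that r by (intro ballI xi_var[rule_format, of "Suc t" i r]) auto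
    from expectation_le_of_indicator_integral_le[OF sigma_sets_top this]
    show "integrable M (\<lambda>\<omega>. (norm (\<xi> (Suc t) i r \<omega>))\<^sup>2) \<and> (\<integral>\<omega>. (norm (\<xi> (Suc t) i r \<omega>))\<^sup>2 \<partial>M) \<le> \<sigma>\<^sup>2"
      using xi_int that r by simp
  qed
  show ?thesis
    by (intro allI impI ballI, rule inner_neg_lipschitz_local_iterate_expectation_le[OF rec _ eta_pos L_pos small _ noise])
      (use Lip int_fin in blast)+
qed

end
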